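(* Let $(\mathcal{P},\cdot)$ be an admissible Poisson algebra and let $e_1,e_2$ be non-zero idempotents with $e_1\cdot e_2=e_2\cdot e_1=0$. For $k=1,2$ and $i\in\{0,1\}$ put $\mathcal{P}^k_{i,i}=\{x\in\mathcal{P}: e_k\cdot x=x\cdot e_k=ix\}$. Then $\mathcal{P}$ is the direct sum of subalgebras $$\mathcal{P}=\big(\mathcal{P}^1_{0,0}\cap\mathcal{P}^2_{0,0}\big)\oplus\mathcal{P}^1_{1,1}\oplus\mathcal{P}^2_{1,1}.$$
   Context: $\mathbb{K}$ is a field of characteristic different from $2$ and $3$. Associator: $A(X,Y,Z)=(X\cdot Y)\cdot Z-X\cdot(Y\cdot Z)$. An admissible Poisson algebra is a $\mathbb{K}$-vector space $\mathcal{P}$ with a bilinear product $\cdot$ satisfying $3A(X,Y,Z)=(X\cdot Z)\cdot Y+(Y\cdot Z)\cdot X-(Y\cdot X)\cdot Z-(Z\cdot X)\cdot Y$ for all $X,Y,Z$. An idempotent is $e$ with $e\cdot e=e$. *)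

theory Defs
  imports Main "HOL.Vector_Spaces"
begin

definition bilinear_product :: "('k::field \<Rightarrow> 'v::ab_group_add \<Rightarrow> 'v) \<Rightarrow> ('v \<Rightarrow> 'v \<Rightarrow> 'v) \<Rightarrow> bool" where
  "bilinear_product scale mult \<longleftrightarrow>
     (\<forall>x y z. mult (x + y) z = mult x z + mult y z) \<and>
     (\<forall>x y z. mult x (y + z) = mult x y + mult x z) \<and>
     (\<forall>c x y. mult (scale c x) y = scale c (mult x y)) \<and>
     (\<forall>c x y. mult x (scale c y) = scale c (mult x y))"

definition associator :: "('v::ab_group_add \<Rightarrow> 'v \<Rightarrow> 'v) \<Rightarrow> 'v \<Rightarrow> 'v \<Rightarrow> 'v \<Rightarrow> 'v" where
  "associator mult x y z = mult (mult x y) z - mult x (mult y z)"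

definition admissible_poisson :: "('k::field \<Rightarrow> 'v::ab_group_add \<Rightarrow> 'v) \<Rightarrow> ('v \<Rightarrow> 'v \<Rightarrow> 'v) \<Rightarrow> bool" where
  "admissible_poisson scale mult \<longleftrightarrow>
     vector_space scale \<and> bilinear_product scale mult \<and>
     (\<forall>x y z. scale 3 (associator mult x y z) =
        mult (mult x z) y + mult (mult y z) x - mult (mult y x) z - mult (mult z x) y)"

definition peirce_space :: "('k::field \<Rightarrow> 'v::ab_group_add \<Rightarrow> 'v) \<Rightarrow> ('v \<Rightarrow> 'v \<Rightarrow> 'v) \<Rightarrow> 'v \<Rightarrow> 'k \<Rightarrow> 'v set" where
  "peirce_space scale mult e i = {x. mult e x = scale i x \<and> mult x e = scale i x}"

definition subalgebra :: "('k::field \<Rightarrow> 'v::ab_group_add \<Rightarrow> 'v) \<Rightarrow> ('v \<Rightarrow> 'v \<Rightarrow> 'v) \<Rightarrow> 'v set \<Rightarrow> bool" where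
  "subalgebra scale mult S \<longleftrightarrow> module.subspace scale S \<and> (\<forall>x\<in>S. \<forall>y\<in>S. mult x y \<in> S)"

definition direct_sum3 :: "'v::ab_group_add set \<Rightarrow> 'v set \<Rightarrow> 'v set \<Rightarrow> bool" where
  "direct_sum3 A B C \<longleftrightarrow> (\<forall>x. \<exists>!(a, b, c). a \<in> A \<and> b \<in> B \<and> c \<in> C \<and> x = a + b + c)"

end

theory Submission
  imports Defs
begin

(* Each step evaluates the admissibility identity at a few triples built from the idempotents and
   takes a linear combination in which all other products cancel, leaving 3, 4 or 12 times the
   wanted expression; this is where the characteristic assumptions enter.  For an idempotent e
   this shows that e commutes with every element, that left multiplication L by e satisfies
   L(L a) = L a, and that every Peirce space of e is closed under products.  For orthogonal
   idempotents e1, e2 one gets e1 (e2 x) = 0, so the decomposition of x is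
   (x - e1 x - e2 x) + e1 x + e2 x, and applying e1 and e2 to any decomposition shows that it
   is unique. *)

lemma direct_sum3I:
  fixes q r :: "'v::ab_group_add \<Rightarrow> 'v"
  assumes "\<And>x. x - q x - r x \<in> A" "\<And>x. q x \<in> B" "\<And>x. r x \<in> C"
    and "\<And>a b c. a \<in> A \<Longrightarrow> b \<in> B \<Longrightarrow> c \<in> C \<Longrightarrow> q (a + b + c) = b"
    and "\<And>a b c. a \<in> A \<Longrightarrow> b \<in> B \<Longrightarrow> c \<in> C \<Longrightarrow> r (a + b + c) = c"
  shows "direct_sum3 A B C"
  unfolding direct_sum3_def
proof
  fix x
  show "\<exists>!(a, b, c). a \<in> A \<and> b \<in> B \<and> c \<in> C \<and> x = a + b + c"
  proof (rule ex1I[of _ "(x - q x - r x, q x, r x)"])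
    show "case (x - q x - r x, q x, r x) of (a, b, c) \<Rightarrow> a \<in> A \<and> b \<in> B \<and> c \<in> C \<and> x = a + b + c"
      using assms(1-3) by simp
  next
    fix t assume "case t of (a, b, c) \<Rightarrow> a \<in> A \<and> b \<in> B \<and> c \<in> C \<and> x = a + b + c"
    then show "t = (x - q x - r x, q x, r x)"
      using assms(4,5) by (cases t) (auto simp: algebra_simps)
  qed
qed

locale admissible_poisson_algebra =
  fixes scale :: "'k::field \<Rightarrow> 'v::ab_group_add \<Rightarrow> 'v"
    and mult :: "'v \<Rightarrow> 'v \<Rightarrow> 'v"
  assumes admissible: "admissible_poisson scale mult"
    and two_nonzero: "(2::'k) \<noteq> 0" and three_nonzero: "(3::'k) \<noteq> 0"
begin

sublocale vector_space scale
  using admissible unfolding admissible_poisson_def by blast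

lemma mult_add_left: "mult (x + y) z = mult x z + mult y z"
  and mult_add_right: "mult x (y + z) = mult x y + mult x z"
  and mult_scale_left: "mult (scale c x) y = scale c (mult x y)"
  and mult_scale_right: "mult x (scale c y) = scale c (mult x y)"
  using admissible unfolding admissible_poisson_def bilinear_product_def by blast+

lemma mult_zero_left [simp]: "mult 0 z = 0"
  using mult_add_left[of 0 0 z] by simp

lemma mult_zero_right [simp]: "mult z 0 = 0"
  using mult_add_right[of z 0 0] by simp

lemma mult_diff_left: "mult (x - y) z = mult x z - mult y z"
  using mult_add_left[of "x - y" y z] by (simp add: algebra_simps)

lemma mult_diff_right: "mult z (x - y) = mult z x - mult z y"
  using mult_add_right[of z "x - y" y] by (simp add: algebra_simps)

lemma mult_minus_left: "mult (- x) z = - mult x z"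
  using mult_diff_left[of 0 x z] by simp

lemma mult_minus_right: "mult z (- x) = - mult z x"
  using mult_diff_right[of z 0 x] by simp

lemmas mult_additive =
  mult_add_left mult_add_right mult_diff_left mult_diff_right mult_minus_left mult_minus_right

lemma double_eq_zero_iff: "(w::'v) + w = 0 \<longleftrightarrow> w = 0"
  using two_nonzero scale_left_distrib[of 1 1 w] by auto

lemma triple_eq_zero_iff: "(w::'v) + w + w = 0 \<longleftrightarrow> w = 0"
  using three_nonzero scale_left_distrib[of 2 1 w] scale_left_distrib[of 1 1 w] by auto

text \<open>The admissibility identity with the factor 3 written additively, so that identities
  between products can be checked by additive normalisation alone.\<close>

definition admissibility_defect :: "'v \<Rightarrow> 'v \<Rightarrow> 'v \<Rightarrow> 'v" where
  "admissibility_defect x y z = (let a = mult (mult x y) z - mult x (mult y z) in a + a + a)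
     - (mult (mult x z) y + mult (mult y z) x - mult (mult y x) z - mult (mult z x) y)"

lemma admissibility_defect_eq_0: "admissibility_defect x y z = 0"
proof -
  have "scale 3 (associator mult x y z) =
        mult (mult x z) y + mult (mult y z) x - mult (mult y x) z - mult (mult z x) y"
    using admissible unfolding admissible_poisson_def by blast
  moreover have "scale 3 w = w + w + w" for w
    using scale_left_distrib[of 2 1 w] scale_left_distrib[of 1 1 w] by simp
  ultimately show ?thesis
    unfolding admissibility_defect_def Let_def associator_def by simp
qed


definition sym_mult :: "'v \<Rightarrow> 'v \<Rightarrow> 'v" where
  "sym_mult x y = mult x y + mult y x"

lemma sym_mult_idempotent_twice:
  assumes idem: "mult e e = e"
  shows "sym_mult e (sym_mult e y) = sym_mult e y + sym_mult e y"
proof -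
  define Y where "Y = sym_mult e (sym_mult e y) - sym_mult e y - sym_mult e y"
  have "Y + Y + Y = - admissibility_defect e y e + admissibility_defect y e e
      + admissibility_defect y e e - admissibility_defect e e y"
    unfolding Y_def sym_mult_def admissibility_defect_def Let_def
    by (simp only: mult_additive idem) (simp add: algebra_simps)
  then have "Y = 0" by (simp add: admissibility_defect_eq_0 triple_eq_zero_iff)
  then show ?thesis unfolding Y_def by (simp add: algebra_simps)
qed

lemma idempotent_mult_commute:
  assumes idem: "mult e e = e"
  shows "mult e a = mult a e"
proof -
  define D where "D = mult e a - mult a e"
  define X where "X = D - sym_mult e D"
  have "X + X + X = admissibility_defect e e a - admissibility_defect e a e
      + admissibility_defect a e e"
    unfolding X_def D_def sym_mult_def admissibility_defect_def Let_def
    by (simp only: mult_additive idem) (simp add: algebra_simps)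
  then have "X = 0" by (simp add: admissibility_defect_eq_0 triple_eq_zero_iff)
  then have "sym_mult e D = D" unfolding X_def by simp
  with sym_mult_idempotent_twice[OF idem, of D] have "D = 0" by simp
  then show ?thesis unfolding D_def by simp
qed

lemma idempotent_mult_idem:
  assumes idem: "mult e e = e"
  shows "mult e (mult e a) = mult e a"
proof -
  define W where "W = mult e (mult e a) - mult e a"
  have sym_mult_e: "sym_mult e u = mult e u + mult e u" for u
    unfolding sym_mult_def using idempotent_mult_commute[OF idem] by simp
  have "(W + W) + (W + W) = 0"
    using sym_mult_idempotent_twice[OF idem, of a] unfolding W_def sym_mult_e
    by (simp only: mult_additive) (simp add: algebra_simps)
  then have "W = 0" by (simp only: double_eq_zero_iff)
  then show ?thesis unfolding W_def by simp
qed

lemma mem_peirce_space_iff: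
  "x \<in> peirce_space scale mult e c \<longleftrightarrow> mult e x = scale c x \<and> mult x e = scale c x"
  unfolding peirce_space_def by simp

lemma peirce_space_mult_closed:
  assumes idem: "mult e e = e"
    and x: "x \<in> peirce_space scale mult e c" and y: "y \<in> peirce_space scale mult e c"
  shows "mult x y \<in> peirce_space scale mult e c"
proof -
  from x y have ex: "mult e x = scale c x" "mult x e = scale c x"
    and ey: "mult e y = scale c y" "mult y e = scale c y"
    by (simp_all add: mem_peirce_space_iff)
  define Z where "Z = mult e (mult x y) - scale c (mult x y)"
  define Z4 where "Z4 = (Z + Z) + (Z + Z)"
  have "Z4 + Z4 + Z4 = - admissibility_defect e x y - admissibility_defect e x y
      - admissibility_defect e x y - admissibility_defect e x y
      + admissibility_defect x e y - admissibility_defect x y e"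
    unfolding Z4_def Z_def admissibility_defect_def Let_def
    by (simp only: mult_additive mult_scale_left mult_scale_right ex ey) (simp add: algebra_simps)
  then have "Z = 0"
    unfolding Z4_def by (simp add: admissibility_defect_eq_0 triple_eq_zero_iff double_eq_zero_iff)
  then have "mult e (mult x y) = scale c (mult x y)" unfolding Z_def by simp
  then show ?thesis
    using idempotent_mult_commute[OF idem] by (simp add: mem_peirce_space_iff)
qed


lemma idempotent_mult_mem_peirce_one:
  assumes idem: "mult e e = e"
  shows "mult e a \<in> peirce_space scale mult e 1"
  using idempotent_mult_idem[OF idem] idempotent_mult_commute[OF idem]
  by (simp add: mem_peirce_space_iff)

lemma subspace_peirce_space: "subspace (peirce_space scale mult e c)"
proof (rule subspaceI)
  show "0 \<in> peirce_space scale mult e c" by (simp add: mem_peirce_space_iff)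
next
  fix x y assume "x \<in> peirce_space scale mult e c" "y \<in> peirce_space scale mult e c"
  then show "x + y \<in> peirce_space scale mult e c"
    by (simp add: mem_peirce_space_iff mult_additive scale_right_distrib)
next
  fix a x assume "x \<in> peirce_space scale mult e c"
  then show "scale a x \<in> peirce_space scale mult e c"
    by (simp add: mem_peirce_space_iff mult_scale_left mult_scale_right scale_left_commute)
qed

lemma subalgebra_peirce_space:
  assumes "mult e e = e"
  shows "subalgebra scale mult (peirce_space scale mult e c)"
  unfolding subalgebra_def
  using subspace_peirce_space peirce_space_mult_closed[OF assms] by blast

lemma subalgebra_Int:
  assumes "subalgebra scale mult A" and "subalgebra scale mult B"
  shows "subalgebra scale mult (A \<inter> B)"
  using assms subspace_inter unfolding subalgebra_def by blast

lemma orthogonal_idempotents_mult_annihilate: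
  assumes ee: "mult e e = e" and ff: "mult f f = f"
    and ef: "mult e f = 0" and fe: "mult f e = 0"
  shows "mult e (mult f x) = 0"
proof -
  have comm: "mult (mult e x) f = mult f (mult e x)" "mult (mult f x) e = mult e (mult f x)"
    using idempotent_mult_commute[OF ff] idempotent_mult_commute[OF ee] by simp_all
  define Z where "Z = mult e (mult f x)"
  define Z4 where "Z4 = (Z + Z) + (Z + Z)"
  have "Z4 + Z4 + Z4 = - admissibility_defect e f x - admissibility_defect e f x
      - admissibility_defect e f x + admissibility_defect x e f + admissibility_defect f e x"
    unfolding Z4_def Z_def admissibility_defect_def Let_def
    by (simp only: mult_additive ee ff ef fe comm) (simp add: algebra_simps)
  then show ?thesis
    unfolding Z4_def Z_def by (simp add: admissibility_defect_eq_0 triple_eq_zero_iff double_eq_zero_iff)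
qed


lemma direct_sum3_peirce_spaces:
  assumes e1: "mult e1 e1 = e1" and e2: "mult e2 e2 = e2"
    and e12: "mult e1 e2 = 0" and e21: "mult e2 e1 = 0"
  shows "direct_sum3 (peirce_space scale mult e1 0 \<inter> peirce_space scale mult e2 0)
    (peirce_space scale mult e1 1) (peirce_space scale mult e2 1)"
proof (rule direct_sum3I[where q = "mult e1" and r = "mult e2"])
  fix x
  have "mult e1 (mult e2 x) = 0" "mult e2 (mult e1 x) = 0"
    using orthogonal_idempotents_mult_annihilate e1 e2 e12 e21 by blast+
  then show "x - mult e1 x - mult e2 x \<in> peirce_space scale mult e1 0 \<inter> peirce_space scale mult e2 0"
    using idempotent_mult_idem[OF e1] idempotent_mult_idem[OF e2]
      idempotent_mult_commute[OF e1] idempotent_mult_commute[OF e2]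
    by (simp add: mem_peirce_space_iff mult_additive)
  show "mult e1 x \<in> peirce_space scale mult e1 1" "mult e2 x \<in> peirce_space scale mult e2 1"
    using idempotent_mult_mem_peirce_one e1 e2 by blast+
next
  fix a b c
  assume "a \<in> peirce_space scale mult e1 0 \<inter> peirce_space scale mult e2 0"
    and "b \<in> peirce_space scale mult e1 1" and "c \<in> peirce_space scale mult e2 1"
  then have a: "mult e1 a = 0" "mult e2 a = 0" and b: "mult e1 b = b" and c: "mult e2 c = c"
    by (simp_all add: mem_peirce_space_iff)
  have "mult e2 b = 0" "mult e1 c = 0"
    using orthogonal_idempotents_mult_annihilate[OF e2 e1 e21 e12, of b]
      orthogonal_idempotents_mult_annihilate[OF e1 e2 e12 e21, of c] b c by simp_all
  then show "mult e1 (a + b + c) = b" "mult e2 (a + b + c) = c"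
    using a b c by (simp_all add: mult_additive)
qed


end

theorem mainTheorem7:
  fixes scale :: "'k::field \<Rightarrow> 'v::ab_group_add \<Rightarrow> 'v"
    and mult :: "'v \<Rightarrow> 'v \<Rightarrow> 'v"
    and e1 e2 :: 'v
  assumes char2: "(2::'k) \<noteq> 0" and char3: "(3::'k) \<noteq> 0"
    and adm: "admissible_poisson scale mult"
    and e1_idem: "mult e1 e1 = e1" and e1_nz: "e1 \<noteq> 0"
    and e2_idem: "mult e2 e2 = e2" and e2_nz: "e2 \<noteq> 0"
    and orth12: "mult e1 e2 = 0" and orth21: "mult e2 e1 = 0"
  shows "subalgebra scale mult (peirce_space scale mult e1 0 \<inter> peirce_space scale mult e2 0)
       \<and> subalgebra scale mult (peirce_space scale mult e1 1)
       \<and> subalgebra scale mult (peirce_space scale mult e2 1)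
       \<and> direct_sum3 (peirce_space scale mult e1 0 \<inter> peirce_space scale mult e2 0)
                     (peirce_space scale mult e1 1) (peirce_space scale mult e2 1)"
proof -
  interpret admissible_poisson_algebra scale mult
    using adm char2 char3 by unfold_locales
  show ?thesis
    using subalgebra_Int subalgebra_peirce_space e1_idem e2_idem
      direct_sum3_peirce_spaces[OF e1_idem e2_idem orth12 orth21]
    by blast
qed

end
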